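(* Let $\beta,\delta\in(0,1)$, $K>0$, $d_1,d_2>0$, and let $\eta_1,\eta_2\ge0$ be constants. Consider $$\frac{df}{dt}=\tfrac12 fm\beta L-\delta f-\eta_1\frac{f}{f+d_1},\qquad \frac{dm}{dt}=\tfrac12 fm\beta L-\delta m+\eta_2\frac{m}{m+d_2},\qquad L=1-\frac{f+m}{K}.$$ If $\beta K<2\delta+\frac{\eta_1}{K+d_1}-\frac{\eta_2}{d_2}$ and $\delta>\frac{\eta_2}{d_2}$, then the trivial equilibrium $(0,0)$ is globally asymptotically stable.
   Context: $f,m$ are female and male densities, with populations considered in the region $0\le f,m$, $f+m\le K$. The model uses saturating female harvesting and male stocking. *)

theory Defs
  imports "HOL-Analysis.Analysis"
begin

definition Lfac :: "real \<Rightarrow> real \<Rightarrow> real \<Rightarrow> real" where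
  "Lfac K f m = 1 - (f + m) / K"

definition rhs_f :: "real \<Rightarrow> real \<Rightarrow> real \<Rightarrow> real \<Rightarrow> real \<Rightarrow> real \<Rightarrow> real \<Rightarrow> real" where
  "rhs_f \<beta> \<delta> K d1 \<eta>1 f m = 1/2 * f * m * \<beta> * Lfac K f m - \<delta> * f - \<eta>1 * f / (f + d1)"

definition rhs_m :: "real \<Rightarrow> real \<Rightarrow> real \<Rightarrow> real \<Rightarrow> real \<Rightarrow> real \<Rightarrow> real \<Rightarrow> real" where
  "rhs_m \<beta> \<delta> K d2 \<eta>2 f m = 1/2 * f * m * \<beta> * Lfac K f m - \<delta> * m + \<eta>2 * m / (m + d2)"

definition region :: "real \<Rightarrow> real \<Rightarrow> real \<Rightarrow> bool" where
  "region K f m \<longleftrightarrow> 0 \<le> f \<and> 0 \<le> m \<and> f + m \<le> K"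

definition is_solution ::
  "real \<Rightarrow> real \<Rightarrow> real \<Rightarrow> real \<Rightarrow> real \<Rightarrow> real \<Rightarrow> real \<Rightarrow>
   (real \<Rightarrow> real) \<Rightarrow> (real \<Rightarrow> real) \<Rightarrow> bool" where
  "is_solution \<beta> \<delta> K d1 d2 \<eta>1 \<eta>2 f m \<longleftrightarrow>
     region K (f 0) (m 0) \<and>
     (\<forall>t\<ge>0. (f has_real_derivative rhs_f \<beta> \<delta> K d1 \<eta>1 (f t) (m t)) (at t within {0..}) \<and>
             (m has_real_derivative rhs_m \<beta> \<delta> K d2 \<eta>2 (f t) (m t)) (at t within {0..}))"

definition origin_GAS ::
  "real \<Rightarrow> real \<Rightarrow> real \<Rightarrow> real \<Rightarrow> real \<Rightarrow> real \<Rightarrow> real \<Rightarrow> bool" where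
  "origin_GAS \<beta> \<delta> K d1 d2 \<eta>1 \<eta>2 \<longleftrightarrow>
     (\<forall>\<epsilon>>0. \<exists>r>0. \<forall>f m. is_solution \<beta> \<delta> K d1 d2 \<eta>1 \<eta>2 f m \<longrightarrow>
        norm (f 0, m 0) < r \<longrightarrow> (\<forall>t\<ge>0. norm (f t, m t) < \<epsilon>)) \<and>
     (\<forall>f m. is_solution \<beta> \<delta> K d1 d2 \<eta>1 \<eta>2 f m \<longrightarrow>
        ((\<lambda>t. (f t, m t)) \<longlongrightarrow> (0, 0)) at_top)"

end

theory Submission
  imports Defs "HOL-Real_Asymp.Real_Asymp"
begin

(* The region 0 <= f, 0 <= m, f + m <= K is forward invariant: each population solves a
   linear equation u' = u g and so keeps its sign, and on the edge f + m = K the total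
   population decreases because delta K exceeds the stocking term eta2 m/(m + d2).
   On the region m L <= K/4, so the mating term is at most beta K f/8; hence for
   suitable weights A >= 1 and kappa > 0 the Lyapunov function V = A f + m satisfies
   V' <= -kappa V, and all solutions decay exponentially, uniformly in the initial value.
   Only beta K < 8 (delta + eta1/(K + d1)) and delta > eta2/d2 are needed. *)

lemma real_continuous_induction:
  fixes P :: "real \<Rightarrow> bool"
  assumes closed_left: "\<And>T. T \<ge> 0 \<Longrightarrow> \<forall>s\<in>{0..<T}. P s \<Longrightarrow> P T"
    and extend_right: "\<And>T. T \<ge> 0 \<Longrightarrow> \<forall>s\<in>{0..T}. P s \<Longrightarrow> eventually P (at_right T)"
    and "t \<ge> 0"
  shows "P t"
proof (rule ccontr)
  assume "\<not> P t"
  define B where "B = {s. s \<ge> 0 \<and> \<not> P s}"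
  define T where "T = Inf B"
  have B: "B \<noteq> {}" "bdd_below B"
    using \<open>\<not> P t\<close> \<open>t \<ge> 0\<close> by (auto simp: B_def bdd_below_def)
  have "T \<ge> 0"
    unfolding T_def using B(1) by (rule cInf_greatest) (auto simp: B_def)
  have before: "\<forall>s\<in>{0..<T}. P s"
    using cInf_lower[OF _ B(2)] by (force simp: B_def T_def)
  then have "P T"
    by (rule closed_left[OF \<open>T \<ge> 0\<close>])
  with before have "\<forall>s\<in>{0..T}. P s"
    by (auto simp: le_less)
  then obtain b where "b > T" and after: "\<And>s. T < s \<Longrightarrow> s < b \<Longrightarrow> P s"
    using extend_right[OF \<open>T \<ge> 0\<close>] by (auto simp: eventually_at_right_field)
  then obtain s where "s \<in> B" "s < b"
    using cInf_less_iff[OF B] by (auto simp: T_def)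
  moreover have "T \<le> s"
    using cInf_lower[OF \<open>s \<in> B\<close> B(2)] by (simp add: T_def)
  ultimately show False
    using \<open>P T\<close> after by (cases "s = T") (auto simp: B_def)
qed

lemma linear_ode_eq_exp_integral:
  fixes u g :: "real \<Rightarrow> real"
  assumes "a \<le> b" and cont_u: "continuous_on {a..b} u" and cont_g: "continuous_on {a..b} g"
    and deriv: "\<And>s. a < s \<Longrightarrow> s < b \<Longrightarrow> (u has_real_derivative u s * g s) (at s)"
    and t: "t \<in> {a..b}"
  shows "u t = u a * exp (integral {a..t} g)"
proof -
  define G where "G x = integral {a..x} g" for x
  have dG: "(G has_real_derivative g x) (at x within {a..b})" if "x \<in> {a..b}" for x
    unfolding G_def by (rule integral_has_real_derivative[OF cont_g that])
  define h where "h x = u x * exp (- G x)" for x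
  have "continuous_on {a..b} G"
    using dG by (rule DERIV_continuous_on)
  then have "continuous_on {a..b} h"
    unfolding h_def by (intro continuous_intros cont_u)
  moreover have "(h has_real_derivative 0) (at x)" if "a < x" "x < b" for x
  proof -
    have "(G has_real_derivative g x) (at x)"
      using dG[of x] that at_within_interior[of x "{a..b}"] by auto
    then have "((\<lambda>x. exp (- G x)) has_real_derivative exp (- G x) * - g x) (at x)"
      by (intro DERIV_fun_exp DERIV_minus)
    then have "(h has_real_derivative u x * (exp (- G x) * - g x) + u x * g x * exp (- G x)) (at x)"
      unfolding h_def[abs_def] by (rule DERIV_mult'[OF deriv[OF that]])
    then show ?thesis
      by (simp add: algebra_simps)
  qed
  ultimately have "h t = h a"
    using t \<open>a \<le> b\<close> by (cases "a = b") (auto intro!: DERIV_isconst2[of a b h])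
  then show ?thesis
    by (simp add: h_def G_def exp_minus field_simps)
qed

lemma differential_inequality_exp_bound:
  fixes V V' :: "real \<Rightarrow> real"
  assumes deriv: "\<And>s. s \<ge> 0 \<Longrightarrow> (V has_real_derivative V' s) (at s within {0..})"
    and ineq: "\<And>s. s \<ge> 0 \<Longrightarrow> V' s \<le> - \<kappa> * V s"
    and "t \<ge> 0"
  shows "V t \<le> V 0 * exp (- \<kappa> * t)"
proof -
  define W where "W s = V s * exp (\<kappa> * s)" for s
  have "W t \<le> W 0"
  proof (rule DERIV_nonpos_imp_decreasing_open[OF \<open>t \<ge> 0\<close>])
    fix s assume "0 < s" "s < t"
    then have "(V has_real_derivative V' s) (at s)"
      using deriv[of s] at_within_interior[of s "{0..}"] by simp
    then have "(W has_real_derivative V' s * exp (\<kappa> * s) + V s * (exp (\<kappa> * s) * \<kappa>)) (at s)"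
      unfolding W_def[abs_def] by (auto intro!: derivative_eq_intros)
    moreover have "V' s * exp (\<kappa> * s) + V s * (exp (\<kappa> * s) * \<kappa>) = (V' s + \<kappa> * V s) * exp (\<kappa> * s)"
      by (simp add: algebra_simps)
    moreover have "(V' s + \<kappa> * V s) * exp (\<kappa> * s) \<le> 0"
      using ineq[of s] \<open>0 < s\<close> by (simp add: mult_nonpos_nonneg)
    ultimately show "\<exists>y. (W has_real_derivative y) (at s) \<and> y \<le> 0"
      by auto
  next
    have "continuous_on {0..t} V"
      by (rule DERIV_continuous_on, rule has_field_derivative_subset[OF deriv]) auto
    then show "continuous_on {0..t} W"
      unfolding W_def[abs_def] by (intro continuous_intros)
  qed
  then have "V t * exp (\<kappa> * t) * exp (- \<kappa> * t) \<le> V 0 * exp (- \<kappa> * t)"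
    by (simp add: W_def)
  then show ?thesis
    by (simp add: mult.assoc flip: exp_add)
qed

lemma decay_weights_exist:
  fixes a b c :: real
  assumes "a > 0" "b \<ge> 0" "c > 0"
  obtains \<kappa> A where "\<kappa> > 0" "A \<ge> 1" "\<kappa> \<le> a" "\<kappa> * A + b \<le> A * c"
proof
  define A where "A = 1 + 2 * b / c"
  show "min a (c / 2) > 0" "min a (c / 2) \<le> a"
    using assms by auto
  show "A \<ge> 1"
    using assms by (simp add: A_def)
  have "min a (c / 2) * A \<le> c / 2 * A"
    using \<open>A \<ge> 1\<close> by (intro mult_right_mono) auto
  moreover have "c / 2 * A + b \<le> A * c"
    using \<open>c > 0\<close> \<open>b \<ge> 0\<close> by (simp add: A_def field_simps)
  ultimately show "min a (c / 2) * A + b \<le> A * c"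
    by linarith
qed

lemma origin_GAS_if_exponential_bound:
  assumes "\<kappa> > 0" "C \<ge> 0"
    and bound: "\<And>f m t. is_solution \<beta> \<delta> K d1 d2 \<eta>1 \<eta>2 f m \<Longrightarrow> t \<ge> 0 \<Longrightarrow>
       norm (f t, m t) \<le> C * norm (f 0, m 0) * exp (- \<kappa> * t)"
  shows "origin_GAS \<beta> \<delta> K d1 d2 \<eta>1 \<eta>2"
  unfolding origin_GAS_def
proof (intro conjI allI impI)
  fix \<epsilon> :: real assume "\<epsilon> > 0"
  show "\<exists>r>0. \<forall>f m. is_solution \<beta> \<delta> K d1 d2 \<eta>1 \<eta>2 f m \<longrightarrow>
      norm (f 0, m 0) < r \<longrightarrow> (\<forall>t\<ge>0. norm (f t, m t) < \<epsilon>)"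
  proof (intro exI[of _ "\<epsilon> / (C + 1)"] conjI allI impI)
    show "\<epsilon> / (C + 1) > 0"
      using \<open>\<epsilon> > 0\<close> \<open>C \<ge> 0\<close> by simp
    fix f m t assume sol: "is_solution \<beta> \<delta> K d1 d2 \<eta>1 \<eta>2 f m"
      and small: "norm (f 0, m 0) < \<epsilon> / (C + 1)" and "t \<ge> (0::real)"
    have "norm (f t, m t) \<le> C * norm (f 0, m 0) * exp (- \<kappa> * t)"
      using bound[OF sol \<open>t \<ge> 0\<close>] .
    also have "\<dots> \<le> C * norm (f 0, m 0)"
      using \<open>\<kappa> > 0\<close> \<open>t \<ge> 0\<close> \<open>C \<ge> 0\<close> by (intro mult_left_le) auto
    also have "\<dots> \<le> C * (\<epsilon> / (C + 1))"
      using small \<open>C \<ge> 0\<close> by (intro mult_left_mono) auto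
    also have "\<dots> < \<epsilon>"
      using \<open>\<epsilon> > 0\<close> \<open>C \<ge> 0\<close> by (simp add: field_simps)
    finally show "norm (f t, m t) < \<epsilon>" .
  qed
next
  fix f m assume sol: "is_solution \<beta> \<delta> K d1 d2 \<eta>1 \<eta>2 f m"
  have lim: "((\<lambda>t. C * norm (f 0, m 0) * exp (- \<kappa> * t)) \<longlongrightarrow> 0) at_top"
    using \<open>\<kappa> > 0\<close> by real_asymp
  have upper: "\<forall>\<^sub>F t in at_top. norm (f t, m t) \<le> C * norm (f 0, m 0) * exp (- \<kappa> * t)"
    using eventually_ge_at_top[of 0] by eventually_elim (rule bound[OF sol])
  have "((\<lambda>t. norm (f t, m t)) \<longlongrightarrow> 0) at_top"
    by (rule tendsto_sandwich[OF _ upper tendsto_const lim]) simp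
  then show "((\<lambda>t. (f t, m t)) \<longlongrightarrow> (0, 0)) at_top"
    by (simp add: tendsto_norm_zero_iff flip: zero_prod_def)
qed

lemma mating_factor_le:
  assumes "K > 0" "region K f m"
  shows "m * Lfac K f m \<le> K / 4"
proof -
  have "m * Lfac K f m \<le> m * (1 - m / K)"
    using assms by (intro mult_left_mono) (auto simp: region_def Lfac_def divide_right_mono)
  also have "\<dots> = K / 4 - (K - 2 * m)\<^sup>2 / (4 * K)"
    using \<open>K > 0\<close> by (simp add: field_simps power2_eq_square)
  also have "\<dots> \<le> K / 4"
    using \<open>K > 0\<close> by simp
  finally show ?thesis .
qed

lemma mating_term_le:
  assumes "\<beta> > 0" "K > 0" "region K f m"
  shows "1/2 * f * m * \<beta> * Lfac K f m \<le> \<beta> * K / 8 * f"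
proof -
  have "1/2 * f * m * \<beta> * Lfac K f m = \<beta> * f / 2 * (m * Lfac K f m)"
    by simp
  also have "\<dots> \<le> \<beta> * f / 2 * (K / 4)"
    using assms mating_factor_le[OF \<open>K > 0\<close> \<open>region K f m\<close>]
    by (intro mult_left_mono) (auto simp: region_def)
  also have "\<dots> = \<beta> * K / 8 * f"
    by simp
  finally show ?thesis .
qed

lemma rhs_f_le:
  assumes "\<beta> > 0" "K > 0" "d1 > 0" "\<eta>1 \<ge> 0" "region K f m"
  shows "rhs_f \<beta> \<delta> K d1 \<eta>1 f m \<le> - (\<delta> + \<eta>1 / (K + d1) - \<beta> * K / 8) * f"
proof -
  have "\<eta>1 / (K + d1) * f \<le> \<eta>1 * f / (f + d1)"
    using assms by (simp add: region_def divide_left_mono mult_nonneg_nonneg)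
  moreover have "- (\<delta> + \<eta>1 / (K + d1) - \<beta> * K / 8) * f = \<beta> * K / 8 * f - \<delta> * f - \<eta>1 / (K + d1) * f"
    by (simp add: algebra_simps)
  ultimately show ?thesis
    using mating_term_le[OF \<open>\<beta> > 0\<close> \<open>K > 0\<close> \<open>region K f m\<close>]
    unfolding rhs_f_def by linarith
qed

lemma rhs_m_le:
  assumes "\<beta> > 0" "K > 0" "d2 > 0" "\<eta>2 \<ge> 0" "region K f m"
  shows "rhs_m \<beta> \<delta> K d2 \<eta>2 f m \<le> \<beta> * K / 8 * f - (\<delta> - \<eta>2 / d2) * m"
proof -
  have "\<eta>2 * m / (m + d2) \<le> \<eta>2 / d2 * m"
    using assms by (simp add: region_def divide_left_mono mult_nonneg_nonneg)
  moreover have "\<beta> * K / 8 * f - (\<delta> - \<eta>2 / d2) * m = \<beta> * K / 8 * f - \<delta> * m + \<eta>2 / d2 * m"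
    by (simp add: algebra_simps)
  ultimately show ?thesis
    using mating_term_le[OF \<open>\<beta> > 0\<close> \<open>K > 0\<close> \<open>region K f m\<close>]
    unfolding rhs_m_def by linarith
qed

lemma weighted_rhs_le:
  assumes "\<beta> > 0" "K > 0" "d1 > 0" "d2 > 0" "\<eta>1 \<ge> 0" "\<eta>2 \<ge> 0" "region K f m"
    and "A \<ge> 0" "\<kappa> \<le> \<delta> - \<eta>2 / d2"
    and weight: "\<kappa> * A + \<beta> * K / 8 \<le> A * (\<delta> + \<eta>1 / (K + d1) - \<beta> * K / 8)"
  shows "A * rhs_f \<beta> \<delta> K d1 \<eta>1 f m + rhs_m \<beta> \<delta> K d2 \<eta>2 f m \<le> - \<kappa> * (A * f + m)"
proof -
  have fm: "f \<ge> 0" "m \<ge> 0"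
    using \<open>region K f m\<close> by (auto simp: region_def)
  define c where "c = \<delta> + \<eta>1 / (K + d1) - \<beta> * K / 8"
  have "A * rhs_f \<beta> \<delta> K d1 \<eta>1 f m \<le> A * (- c * f)"
    using rhs_f_le[of \<beta> K d1 \<eta>1 f m \<delta>] assms by (intro mult_left_mono) (auto simp: c_def)
  moreover have "rhs_m \<beta> \<delta> K d2 \<eta>2 f m \<le> \<beta> * K / 8 * f - (\<delta> - \<eta>2 / d2) * m"
    using rhs_m_le[of \<beta> K d2 \<eta>2 f m \<delta>] assms by simp
  moreover have "(\<kappa> * A + \<beta> * K / 8) * f \<le> A * c * f"
    using mult_right_mono[OF weight \<open>f \<ge> 0\<close>] by (simp add: c_def)
  moreover have "\<kappa> * m \<le> (\<delta> - \<eta>2 / d2) * m"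
    using \<open>\<kappa> \<le> \<delta> - \<eta>2 / d2\<close> \<open>m \<ge> 0\<close> by (rule mult_right_mono)
  ultimately show ?thesis
    by (simp add: algebra_simps)
qed

lemma rhs_sum_neg_at_capacity:
  assumes "K > 0" "d1 > 0" "d2 > 0" "\<eta>1 \<ge> 0" "\<eta>2 \<ge> 0" "\<eta>2 / d2 < \<delta>"
    and "f \<ge> 0" "m \<ge> 0" "f + m = K"
  shows "rhs_f \<beta> \<delta> K d1 \<eta>1 f m + rhs_m \<beta> \<delta> K d2 \<eta>2 f m < 0"
proof -
  have "\<eta>2 * m / (m + d2) \<le> \<eta>2 * m / d2"
    using assms by (simp add: divide_left_mono)
  also have "\<dots> \<le> \<eta>2 / d2 * K"
    using assms by (simp add: divide_right_mono mult_left_mono)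
  also have "\<dots> < \<delta> * K"
    using assms by (intro mult_strict_right_mono)
  finally have "\<eta>2 * m / (m + d2) < \<delta> * f + \<delta> * m"
    using \<open>f + m = K\<close> by (metis distrib_left)
  moreover have "\<eta>1 * f / (f + d1) \<ge> 0"
    using assms by simp
  moreover have "Lfac K f m = 0"
    using \<open>f + m = K\<close> \<open>K > 0\<close> by (simp add: Lfac_def)
  ultimately show ?thesis
    unfolding rhs_f_def rhs_m_def by simp
qed

lemma is_solution_has_derivative:
  assumes "is_solution \<beta> \<delta> K d1 d2 \<eta>1 \<eta>2 f m" "t \<ge> 0"
  shows "(f has_real_derivative rhs_f \<beta> \<delta> K d1 \<eta>1 (f t) (m t)) (at t within {0..})"
    and "(m has_real_derivative rhs_m \<beta> \<delta> K d2 \<eta>2 (f t) (m t)) (at t within {0..})"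
  using assms by (auto simp: is_solution_def)

lemma is_solution_continuous_on:
  assumes "is_solution \<beta> \<delta> K d1 d2 \<eta>1 \<eta>2 f m"
  shows "continuous_on {0..} f" and "continuous_on {0..} m"
  by (rule DERIV_continuous_on, rule is_solution_has_derivative[OF assms], simp)+

lemma lim_at_right_of_solution:
  assumes "is_solution \<beta> \<delta> K d1 d2 \<eta>1 \<eta>2 f m" "T \<ge> 0"
  shows "(f \<longlongrightarrow> f T) (at_right T)" and "(m \<longlongrightarrow> m T) (at_right T)"
proof -
  have "at_right T \<le> at T within {0..}"
    using \<open>T \<ge> 0\<close> by (intro at_le) auto
  then show "(f \<longlongrightarrow> f T) (at_right T)" "(m \<longlongrightarrow> m T) (at_right T)"
    using is_solution_continuous_on[OF assms(1)] \<open>T \<ge> 0\<close>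
    by (auto simp: continuous_on_def intro: tendsto_mono)
qed

lemma capacity_eventually_at_right:
  assumes "K > 0" "d1 > 0" "d2 > 0" "\<eta>1 \<ge> 0" "\<eta>2 \<ge> 0" "\<eta>2 / d2 < \<delta>"
    and sol: "is_solution \<beta> \<delta> K d1 d2 \<eta>1 \<eta>2 f m"
    and "T \<ge> 0" and reg: "region K (f T) (m T)"
  shows "\<forall>\<^sub>F t in at_right T. f t + m t \<le> K"
proof (cases "f T + m T < K")
  case True
  from order_tendstoD(2)[OF tendsto_add[OF lim_at_right_of_solution[OF sol \<open>T \<ge> 0\<close>]] True]
  show ?thesis
    by (rule eventually_mono) simp
next
  case False
  with reg have capacity: "f T + m T = K"
    by (simp add: region_def)
  have "((\<lambda>t. f t + m t) has_real_derivative
      rhs_f \<beta> \<delta> K d1 \<eta>1 (f T) (m T) + rhs_m \<beta> \<delta> K d2 \<eta>2 (f T) (m T)) (at T within {0..})"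
    using is_solution_has_derivative[OF sol \<open>T \<ge> 0\<close>] by (rule DERIV_add)
  moreover have "rhs_f \<beta> \<delta> K d1 \<eta>1 (f T) (m T) + rhs_m \<beta> \<delta> K d2 \<eta>2 (f T) (m T) < 0"
    using rhs_sum_neg_at_capacity[of K d1 d2 \<eta>1 \<eta>2 \<delta>] assms capacity by (auto simp: region_def)
  ultimately obtain d where "d > 0"
    and "\<forall>h>0. T + h \<in> {0..} \<longrightarrow> h < d \<longrightarrow> f (T + h) + m (T + h) < f T + m T"
    using has_real_derivative_neg_dec_right by blast
  then have "\<forall>t>T. t < T + d \<longrightarrow> f t + m t \<le> K"
    using capacity \<open>T \<ge> 0\<close> by (auto dest: spec[of _ "_ - T"])
  then show ?thesis
    using \<open>d > 0\<close> unfolding eventually_at_right_field by (intro exI[of _ "T + d"]) auto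
qed

lemma solution_nonneg_while_denominators_pos:
  assumes "K > 0" and sol: "is_solution \<beta> \<delta> K d1 d2 \<eta>1 \<eta>2 f m"
    and "0 \<le> T" "T < t" "0 \<le> f T" "0 \<le> m T"
    and pos: "\<And>s. s \<in> {T..t} \<Longrightarrow> 0 < f s + d1 \<and> 0 < m s + d2"
  shows "0 \<le> f t \<and> 0 \<le> m t"
proof -
  define gf where "gf s = 1/2 * m s * \<beta> * Lfac K (f s) (m s) - \<delta> - \<eta>1 / (f s + d1)" for s
  define gm where "gm s = 1/2 * f s * \<beta> * Lfac K (f s) (m s) - \<delta> + \<eta>2 / (m s + d2)" for s
  have cont: "continuous_on {T..t} f" "continuous_on {T..t} m"
    using is_solution_continuous_on[OF sol] \<open>T \<ge> 0\<close> by (auto elim: continuous_on_subset)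
  have "rhs_f \<beta> \<delta> K d1 \<eta>1 (f s) (m s) = f s * gf s"
    and "rhs_m \<beta> \<delta> K d2 \<eta>2 (f s) (m s) = m s * gm s" for s
    by (simp_all add: rhs_f_def rhs_m_def gf_def gm_def algebra_simps)
  then have linear: "(f has_real_derivative f s * gf s) (at s)"
    "(m has_real_derivative m s * gm s) (at s)" if "T < s" for s
    using is_solution_has_derivative[OF sol, of s] that \<open>T \<ge> 0\<close> at_within_interior[of s "{0..}"]
    by auto
  have "continuous_on {T..t} gf" "continuous_on {T..t} gm"
    unfolding gf_def gm_def Lfac_def using cont \<open>K > 0\<close>
    by (auto intro!: continuous_intros dest: pos)
  then have "f t = f T * exp (integral {T..t} gf)" "m t = m T * exp (integral {T..t} gm)"
    using \<open>T < t\<close> cont linear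
    by (auto intro!: linear_ode_eq_exp_integral[of T t f gf] linear_ode_eq_exp_integral[of T t m gm])
  then show ?thesis
    using \<open>0 \<le> f T\<close> \<open>0 \<le> m T\<close> by simp
qed

lemma region_eventually_at_right:
  assumes "K > 0" "d1 > 0" "d2 > 0" "\<eta>1 \<ge> 0" "\<eta>2 \<ge> 0" "\<eta>2 / d2 < \<delta>"
    and sol: "is_solution \<beta> \<delta> K d1 d2 \<eta>1 \<eta>2 f m"
    and "T \<ge> 0" and reg: "region K (f T) (m T)"
  shows "\<forall>\<^sub>F t in at_right T. region K (f t) (m t)"
proof -
  note lim = lim_at_right_of_solution[OF sol \<open>T \<ge> 0\<close>]
  have "\<forall>\<^sub>F t in at_right T. 0 < f t + d1"
    using reg \<open>d1 > 0\<close>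
    by (intro order_tendstoD(1)[OF tendsto_add[OF lim(1) tendsto_const]]) (simp add: region_def)
  moreover have "\<forall>\<^sub>F t in at_right T. 0 < m t + d2"
    using reg \<open>d2 > 0\<close>
    by (intro order_tendstoD(1)[OF tendsto_add[OF lim(2) tendsto_const]]) (simp add: region_def)
  moreover have "\<forall>\<^sub>F t in at_right T. f t + m t \<le> K"
    using capacity_eventually_at_right[OF assms] .
  ultimately have "\<forall>\<^sub>F t in at_right T. 0 < f t + d1 \<and> 0 < m t + d2 \<and> f t + m t \<le> K"
    by (intro eventually_conj)
  then obtain b where "b > T"
    and near: "\<And>t. T < t \<Longrightarrow> t < b \<Longrightarrow> 0 < f t + d1 \<and> 0 < m t + d2 \<and> f t + m t \<le> K"
    unfolding eventually_at_right_field by blast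
  have "region K (f t) (m t)" if "T < t" "t < b" for t
  proof -
    have "0 < f s + d1 \<and> 0 < m s + d2" if "s \<in> {T..t}" for s
      using near[of s] reg \<open>d1 > 0\<close> \<open>d2 > 0\<close> that \<open>t < b\<close>
      by (cases "s = T") (auto simp: region_def)
    then have "0 \<le> f t \<and> 0 \<le> m t"
      using reg \<open>K > 0\<close> \<open>T \<ge> 0\<close> \<open>T < t\<close>
      by (intro solution_nonneg_while_denominators_pos[OF _ sol]) (auto simp: region_def)
    then show ?thesis
      using near[OF that] by (simp add: region_def)
  qed
  then show ?thesis
    using \<open>b > T\<close> by (auto simp: eventually_at_right_field)
qed

lemma region_invariant:
  assumes "K > 0" "d1 > 0" "d2 > 0" "\<eta>1 \<ge> 0" "\<eta>2 \<ge> 0" "\<eta>2 / d2 < \<delta>"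
    and sol: "is_solution \<beta> \<delta> K d1 d2 \<eta>1 \<eta>2 f m" and "t \<ge> 0"
  shows "region K (f t) (m t)"
proof (rule real_continuous_induction[OF _ _ \<open>t \<ge> 0\<close>])
  fix T :: real
  assume "T \<ge> 0" and before: "\<forall>s\<in>{0..<T}. region K (f s) (m s)"
  show "region K (f T) (m T)"
  proof (cases "T = 0")
    case True
    then show ?thesis
      using sol by (simp add: is_solution_def)
  next
    case False
    then have closure: "closure {0..<T} = {0..T}"
      using \<open>T \<ge> 0\<close> by simp
    have "(\<lambda>t. (f t, m t)) ` closure {0..<T} \<subseteq> {p. region K (fst p) (snd p)}"
    proof (rule image_closure_subset)
      show "continuous_on (closure {0..<T}) (\<lambda>t. (f t, m t))"
        unfolding closure using is_solution_continuous_on[OF sol]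
        by (intro continuous_intros) (auto elim: continuous_on_subset)
      show "closed {p. region K (fst p) (snd p)}"
        unfolding region_def by (intro closed_Collect_conj closed_Collect_le continuous_intros)
      show "(\<lambda>t. (f t, m t)) ` {0..<T} \<subseteq> {p. region K (fst p) (snd p)}"
        using before by auto
    qed
    then show ?thesis
      using \<open>T \<ge> 0\<close> unfolding closure by (auto simp: image_subset_iff)
  qed
next
  fix T :: real
  assume "T \<ge> 0" "\<forall>s\<in>{0..T}. region K (f s) (m s)"
  then show "\<forall>\<^sub>F t in at_right T. region K (f t) (m t)"
    using region_eventually_at_right[OF assms(1-6) sol] by simp
qed

lemma weighted_total_decay:
  assumes "\<beta> > 0" "K > 0" "d1 > 0" "d2 > 0" "\<eta>1 \<ge> 0" "\<eta>2 \<ge> 0" "\<eta>2 / d2 < \<delta>"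
    and sol: "is_solution \<beta> \<delta> K d1 d2 \<eta>1 \<eta>2 f m"
    and "A \<ge> 0" "\<kappa> \<le> \<delta> - \<eta>2 / d2"
    and "\<kappa> * A + \<beta> * K / 8 \<le> A * (\<delta> + \<eta>1 / (K + d1) - \<beta> * K / 8)"
    and "t \<ge> 0"
  shows "A * f t + m t \<le> (A * f 0 + m 0) * exp (- \<kappa> * t)"
proof (rule differential_inequality_exp_bound[where V = "\<lambda>s. A * f s + m s", OF _ _ \<open>t \<ge> 0\<close>])
  fix s :: real assume "s \<ge> 0"
  show "((\<lambda>s. A * f s + m s) has_real_derivative
      A * rhs_f \<beta> \<delta> K d1 \<eta>1 (f s) (m s) + rhs_m \<beta> \<delta> K d2 \<eta>2 (f s) (m s)) (at s within {0..})"
    using is_solution_has_derivative[OF sol \<open>s \<ge> 0\<close>] by (intro DERIV_add DERIV_cmult)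
  show "A * rhs_f \<beta> \<delta> K d1 \<eta>1 (f s) (m s) + rhs_m \<beta> \<delta> K d2 \<eta>2 (f s) (m s) \<le> - \<kappa> * (A * f s + m s)"
    using assms region_invariant[OF assms(2-7) sol \<open>s \<ge> 0\<close>] by (intro weighted_rhs_le)
qed

lemma solution_norm_decay:
  assumes "\<beta> > 0" "K > 0" "d1 > 0" "d2 > 0" "\<eta>1 \<ge> 0" "\<eta>2 \<ge> 0" "\<eta>2 / d2 < \<delta>"
    and sol: "is_solution \<beta> \<delta> K d1 d2 \<eta>1 \<eta>2 f m"
    and "A \<ge> 1" "\<kappa> \<le> \<delta> - \<eta>2 / d2"
    and "\<kappa> * A + \<beta> * K / 8 \<le> A * (\<delta> + \<eta>1 / (K + d1) - \<beta> * K / 8)"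
    and "t \<ge> 0"
  shows "norm (f t, m t) \<le> (A + 1) * norm (f 0, m 0) * exp (- \<kappa> * t)"
proof -
  have "region K (f t) (m t)"
    using region_invariant[OF assms(2-7) sol \<open>t \<ge> 0\<close>] .
  then have "norm (f t, m t) \<le> A * f t + m t"
    using norm_Pair_le[of "f t" "m t"] \<open>A \<ge> 1\<close> mult_right_mono[OF \<open>A \<ge> 1\<close>, of "f t"]
    by (simp add: region_def)
  also have "\<dots> \<le> (A * f 0 + m 0) * exp (- \<kappa> * t)"
    using assms by (intro weighted_total_decay) auto
  also have "\<dots> \<le> (A + 1) * norm (f 0, m 0) * exp (- \<kappa> * t)"
  proof -
    have "A * f 0 \<le> A * norm (f 0, m 0)"
      using \<open>A \<ge> 1\<close> norm_fst_le[of "f 0" "m 0"] by (intro mult_left_mono) auto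
    moreover have "m 0 \<le> norm (f 0, m 0)"
      using norm_snd_le[of "m 0" "f 0"] by simp
    ultimately show ?thesis
      by (intro mult_right_mono) (auto simp: algebra_simps)
  qed
  finally show ?thesis .
qed

theorem mainTheorem10:
  fixes \<beta> \<delta> K d1 d2 \<eta>1 \<eta>2 :: real
  assumes "0 < \<beta>" "\<beta> < 1" "0 < \<delta>" "\<delta> < 1"
    and "K > 0" "d1 > 0" "d2 > 0" "\<eta>1 \<ge> 0" "\<eta>2 \<ge> 0"
    and "\<beta> * K < 2 * \<delta> + \<eta>1 / (K + d1) - \<eta>2 / d2"
    and "\<delta> > \<eta>2 / d2"
  shows "origin_GAS \<beta> \<delta> K d1 d2 \<eta>1 \<eta>2"
proof -
  have "0 \<le> \<eta>1 / (K + d1)" "0 \<le> \<eta>2 / d2"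
    using assms by auto
  then have "0 < \<delta> + \<eta>1 / (K + d1) - \<beta> * K / 8"
    using assms by linarith
  moreover have "0 < \<delta> - \<eta>2 / d2" "0 \<le> \<beta> * K / 8"
    using assms by auto
  ultimately obtain \<kappa> A where "\<kappa> > 0" "A \<ge> 1" "\<kappa> \<le> \<delta> - \<eta>2 / d2"
    and "\<kappa> * A + \<beta> * K / 8 \<le> A * (\<delta> + \<eta>1 / (K + d1) - \<beta> * K / 8)"
    using decay_weights_exist by blast
  then show ?thesis
    using assms solution_norm_decay[of \<beta> K d1 d2 \<eta>1 \<eta>2 \<delta>]
    by (intro origin_GAS_if_exponential_bound[of \<kappa> "A + 1"]) auto
qed

end
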